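(* Let $k$ be even, $1\le s\le k-1$, and let $G$ be a $k$-uniform $s$-cycle with $m$ edges and $n=m(k-s)$ vertices, where $k=q(k-s)$ for an odd integer $q$. Then $G$ is odd-bipartite.
   Context: A $k$-uniform $s$-cycle with $m$ edges has vertex set $\mathbb{Z}_n$, $n=m(k-s)$ (vertex $n+i$ identified with $i$), and edges $e_j=\{j(k-s)+1,\ldots,j(k-s)+k\}$, $j=0,\ldots,m-1$; it is assumed that $n\ge 2k-s$. A $k$-uniform hypergraph with $k$ even and vertex set $V$ is odd-bipartite if either it has no edges or there is a partition $V=V_1\cup V_2$ with $V_1,V_2\ne\emptyset$ such that every edge intersects $V_1$ in an odd number of vertices. *)

theory Defs
  imports Main
begin

definition s_cycle_vertices :: "nat \<Rightarrow> nat \<Rightarrow> nat \<Rightarrow> nat set" where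
  "s_cycle_vertices k s m = {0..<m * (k - s)}"

definition s_cycle_edges :: "nat \<Rightarrow> nat \<Rightarrow> nat \<Rightarrow> nat set set" where
  "s_cycle_edges k s m =
     {{(j * (k - s) + i) mod (m * (k - s)) | i. i \<in> {1..k}} | j. j < m}"

definition odd_bipartite :: "'a set \<Rightarrow> 'a set set \<Rightarrow> bool" where
  "odd_bipartite V E \<longleftrightarrow> E = {} \<or>
     (\<exists>V1 V2. V = V1 \<union> V2 \<and> V1 \<inter> V2 = {} \<and> V1 \<noteq> {} \<and> V2 \<noteq> {} \<and>
        (\<forall>e\<in>E. odd (card (e \<inter> V1))))"

end

theory Submission
  imports Defs
begin

text \<open>Let d = k - s and put into V1 the vertices divisible by d. Every edge is a run of
  k < n consecutive residues mod n starting right after a multiple of d, and d divides n,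
  so the edge meets V1 in exactly k div d = q vertices, an odd number. As q is odd and k
  is even, d \<ge> 2, so the vertex 1 lies in V2 and both parts are nonempty.\<close>

lemma card_multiples_atLeastAtMost:
  fixes d k :: nat
  assumes "d > 0"
  shows "card {i \<in> {1..k}. d dvd i} = k div d"
proof -
  have "{i \<in> {1..k}. d dvd i} = (\<lambda>t. t * d) ` {1..k div d}"
  proof (rule set_eqI, rule iffI)
    fix i assume "i \<in> {i \<in> {1..k}. d dvd i}"
    then obtain t where "i = t * d" "1 \<le> i" "i \<le> k" by (auto elim: dvdE)
    moreover from this have "1 \<le> t" "t \<le> k div d"
      using assms by (auto simp: less_eq_div_iff_mult_less_eq Suc_le_eq intro!: Nat.gr0I)
    ultimately show "i \<in> (\<lambda>t. t * d) ` {1..k div d}" by auto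
  qed (use assms in \<open>auto simp: less_eq_div_iff_mult_less_eq\<close>)
  moreover have "inj_on (\<lambda>t. t * d) {1..k div d}"
    using assms by (auto simp: inj_on_def)
  ultimately show ?thesis by (simp add: card_image)
qed

lemma inj_on_shift_mod:
  fixes a k n :: nat
  assumes "k < n"
  shows "inj_on (\<lambda>i. (a + i) mod n) {1..k}"
proof -
  have "x = y" if "x \<le> y" "y \<le> k" "(a + x) mod n = (a + y) mod n" for x y
  proof -
    have "n dvd y - x"
      using that mod_eq_dvd_iff_nat[of "a + x" "a + y" n] by simp
    moreover have "y - x < n" using that assms by linarith
    ultimately show "x = y"
      using that(1) by (metis diff_is_0_eq' dvd_imp_le le_antisym not_le zero_less_diff)
  qed
  then show ?thesis
    by (auto simp: inj_on_def) (metis nat_le_linear)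
qed

lemma dvd_shift_mod_iff:
  fixes d j i n :: nat
  assumes "d dvd n"
  shows "d dvd (j * d + i) mod n \<longleftrightarrow> d dvd i"
  using assms by (simp add: dvd_mod_iff dvd_add_right_iff)

lemma card_s_cycle_edge_inter_multiples:
  assumes "e \<in> s_cycle_edges k s m" and "k < m * (k - s)"
  shows "card (e \<inter> {x. (k - s) dvd x}) = k div (k - s)"
proof -
  define d n where "d = k - s" and "n = m * (k - s)"
  obtain j where e: "e = (\<lambda>i. (j * d + i) mod n) ` {1..k}"
    using assms(1) unfolding s_cycle_edges_def d_def n_def by blast
  have d_pos: "d > 0"
    using assms(2) unfolding d_def by (metis less_nat_zero_code mult_0_right neq0_conv)
  have "d dvd n" unfolding d_def n_def by simp
  then have "e \<inter> {x. d dvd x} = (\<lambda>i. (j * d + i) mod n) ` {i \<in> {1..k}. d dvd i}"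
    unfolding e using dvd_shift_mod_iff by auto
  also have "card \<dots> = card {i \<in> {1..k}. d dvd i}"
    using inj_on_shift_mod[of k n "j * d"] assms(2)
    by (intro card_image) (auto simp: n_def intro: inj_on_subset)
  also have "\<dots> = k div d"
    using card_multiples_atLeastAtMost[OF d_pos] .
  finally show ?thesis unfolding d_def .
qed

lemma s_cycle_edge_subset_vertices:
  assumes "0 < m * (k - s)" and "e \<in> s_cycle_edges k s m"
  shows "e \<subseteq> s_cycle_vertices k s m"
proof -
  obtain j where "e = (\<lambda>i. (j * (k - s) + i) mod (m * (k - s))) ` {1..k}"
    using assms(2) unfolding s_cycle_edges_def by blast
  then show ?thesis
    unfolding s_cycle_vertices_def using assms(1) by (simp add: image_subset_iff)
qed

lemma s_cycle_odd_bipartite: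
  assumes "2 \<le> k - s" and "k < m * (k - s)" and "odd (k div (k - s))"
  shows "odd_bipartite (s_cycle_vertices k s m) (s_cycle_edges k s m)"
proof -
  define V where "V = s_cycle_vertices k s m"
  define V1 where "V1 = V \<inter> {x. (k - s) dvd x}"
  have n_pos: "0 < m * (k - s)" using assms(2) by linarith
  have "0 \<in> V1"
    unfolding V1_def V_def s_cycle_vertices_def using n_pos by simp
  moreover have "1 \<in> V - V1"
    unfolding V1_def V_def s_cycle_vertices_def using assms(1,2) by simp
  moreover have "odd (card (e \<inter> V1))" if edge: "e \<in> s_cycle_edges k s m" for e
  proof -
    have "e \<inter> V1 = e \<inter> {x. (k - s) dvd x}"
      using s_cycle_edge_subset_vertices[OF n_pos edge] unfolding V1_def V_def by blast
    then show ?thesis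
      using card_s_cycle_edge_inter_multiples[OF edge assms(2)] assms(3) by simp
  qed
  moreover have "V = V1 \<union> (V - V1)" "V1 \<inter> (V - V1) = {}" unfolding V1_def by auto
  ultimately show ?thesis
    unfolding odd_bipartite_def V_def[symmetric] by blast
qed

theorem corollary4p1:
  fixes k s m q :: nat
  assumes "even k" and "1 \<le> s" and "s \<le> k - 1"
    and "k = q * (k - s)" and "odd q"
    and "m * (k - s) \<ge> 2 * k - s"
  shows "odd_bipartite (s_cycle_vertices k s m) (s_cycle_edges k s m)"
proof (rule s_cycle_odd_bipartite)
  have "k - s \<noteq> 1" using assms(1,4,5) by auto
  moreover have "k - s \<noteq> 0" using assms(2,3) by linarith
  ultimately show "2 \<le> k - s" by linarith
  then show "odd (k div (k - s))"
    using assms(4,5) by (metis nonzero_mult_div_cancel_right not_numeral_le_zero)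
  show "k < m * (k - s)" using assms(2,3,6) by linarith
qed

end
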